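(* Let $\mathcal H$ be a separable Hilbert space with inner product $\langle\cdot,\cdot\rangle$ and norm $\|\cdot\|$. Let $(X_i,Y_i)$, $i=1,\dots,n$, be i.i.d. $\mathcal H\times\mathbb R$-valued random variables satisfying $Y_i=\alpha+\langle X_i,\beta\rangle+\varepsilon_i$, where $\varepsilon_1,\dots,\varepsilon_n$ are independent of $X_1,\dots,X_n$, i.i.d., centred, with $E[\varepsilon_1^2]<\infty$ and with cdf twice differentiable with bounded density and bounded derivative of the density. Assume $E\|X_1\|^4<\infty$, $\hat\alpha=\overline Y_n-\langle\overline X_n,\hat\beta\rangle$ and $\|\hat\beta-\beta\|=o_{\mathbb P}(n^{-1/4})$. Let $W$ be a non-negative symmetric weight function with $\int t^4W(t)dt<\infty$. Then, with $X\sim X_1$, $$n\int\Big(\frac tn\sum_{j=1}^n\cos(t\varepsilon_j)\langle X_j-E[X],\hat\beta-\beta\rangle\Big)^2W(t)dt=o_{\mathbb P}(1).$$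
   Context: $\overline Y_n=\frac1n\sum Y_i$, $\overline X_n=\frac1n\sum X_i$; $\hat\alpha,\hat\beta$ are estimators of $\alpha\in\mathbb R,\beta\in\mathcal H$ computed from the sample. *)

theory Defs
  imports "HOL-Probability.Probability"
begin

definition o_P :: "'a measure \<Rightarrow> (nat \<Rightarrow> 'a \<Rightarrow> real) \<Rightarrow> (nat \<Rightarrow> real) \<Rightarrow> bool" where
  "o_P M Z r \<longleftrightarrow>
     (\<forall>e>0. (\<lambda>n. measure M {\<omega> \<in> space M. \<bar>Z n \<omega>\<bar> > e * r n}) \<longlonglongrightarrow> 0)"

definition cdf_of :: "'a measure \<Rightarrow> ('a \<Rightarrow> real) \<Rightarrow> real \<Rightarrow> real" where
  "cdf_of M Z t = measure M {\<omega> \<in> space M. Z \<omega> \<le> t}"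

end

theory Submission
  imports Defs
begin

(* The integrand is t^2/n^2 <V_n(t), betahat - beta>^2 W(t) with
   V_n(t) = sum_j cos(t eps_j) (X_j - E X), so by Cauchy-Schwarz in H the statistic is at most
   ||betahat - beta||^2 A_n, where A_n = (1/n) sum_{i,j} <X_i - E X, X_j - E X> K(eps_i, eps_j)
   and K(a, b) = int t^2 cos(t a) cos(t b) W(t) dt.  As the errors are independent of the
   covariates and the centred covariates are uncorrelated, only the diagonal survives in
   expectation: E A_n <= E ||X - E X||^2 * int t^2 W.  So A_n is bounded in probability (Markov),
   while ||betahat - beta|| = o_P(1).  Beyond their independence from the covariates, nothing
   about the errors is used, nor the symmetry of W or the definition of alphahat. *)

lemma power2_le_one_plus_power4: "(x::real)^2 \<le> 1 + x^4"
proof -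
  have "0 \<le> (x^2 - 1/2)^2" by simp
  then show ?thesis by (simp add: power2_eq_square power4_eq_xxxx algebra_simps)
qed

lemma integrable_power2_mult_weight:
  fixes W :: "real \<Rightarrow> real"
  assumes W_meas: "W \<in> borel_measurable borel" and W_nonneg: "\<And>t. W t \<ge> 0"
    and W_int: "integrable lborel W" and W_4th: "integrable lborel (\<lambda>t. t ^ 4 * W t)"
  shows "integrable lborel (\<lambda>t. t^2 * W t)"
proof (rule Bochner_Integration.integrable_bound[where f="\<lambda>t. W t + t^4 * W t"])
  show "integrable lborel (\<lambda>t. W t + t^4 * W t)" using W_int W_4th by auto
  show "(\<lambda>t. t^2 * W t) \<in> borel_measurable lborel" using W_meas by measurable
  show "AE t in lborel. norm (t^2 * W t) \<le> norm (W t + t^4 * W t)"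
  proof (intro AE_I2)
    fix t :: real
    have "t^2 * W t \<le> (1 + t^4) * W t"
      using power2_le_one_plus_power4 W_nonneg by (rule mult_right_mono)
    then show "norm (t^2 * W t) \<le> norm (W t + t^4 * W t)"
      using W_nonneg[of t] by (simp add: algebra_simps)
  qed
qed

definition cos_kernel :: "(real \<Rightarrow> real) \<Rightarrow> real \<Rightarrow> real \<Rightarrow> real" where
  "cos_kernel W a b = (\<integral>t. t^2 * (cos (t*a) * cos (t*b)) * W t \<partial>lborel)"

lemma cos_product_weight_le:
  assumes "0 \<le> (w::real)"
  shows "t^2 * (\<bar>cos (t*a)\<bar> * \<bar>cos (t*b)\<bar>) * w \<le> t^2 * w"
proof -
  have "\<bar>cos (t*a)\<bar> * \<bar>cos (t*b)\<bar> \<le> 1" by (intro mult_le_one) auto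
  then have "(\<bar>cos (t*a)\<bar> * \<bar>cos (t*b)\<bar>) * (t^2 * w) \<le> t^2 * w"
    using assms by (intro mult_left_le_one_le) auto
  then show ?thesis by (simp add: mult_ac)
qed

lemma integrable_cos_kernel_integrand:
  fixes W :: "real \<Rightarrow> real"
  assumes W_meas: "W \<in> borel_measurable borel" and I2: "integrable lborel (\<lambda>t. t^2 * W t)"
  shows "integrable lborel (\<lambda>t. t^2 * (cos (t*a) * cos (t*b)) * W t)"
proof (rule Bochner_Integration.integrable_bound[OF I2])
  show "(\<lambda>t. t^2 * (cos (t*a) * cos (t*b)) * W t) \<in> borel_measurable lborel"
    using W_meas by measurable
  show "AE t in lborel. norm (t^2 * (cos (t*a) * cos (t*b)) * W t) \<le> norm (t^2 * W t)"
    by (intro AE_I2) (simp add: abs_mult cos_product_weight_le)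
qed

lemma abs_cos_kernel_le:
  fixes W :: "real \<Rightarrow> real"
  assumes W_meas: "W \<in> borel_measurable borel" and W_nonneg: "\<And>t. W t \<ge> 0"
    and I2: "integrable lborel (\<lambda>t. t^2 * W t)"
  shows "\<bar>cos_kernel W a b\<bar> \<le> (\<integral>t. t^2 * W t \<partial>lborel)"
  unfolding cos_kernel_def
proof (rule order_trans[OF integral_abs_bound integral_mono])
  show "integrable lborel (\<lambda>t. \<bar>t^2 * (cos (t*a) * cos (t*b)) * W t\<bar>)"
    using integrable_cos_kernel_integrand[OF W_meas I2] by auto
  show "\<bar>t^2 * (cos (t*a) * cos (t*b)) * W t\<bar> \<le> t^2 * W t" for t
    using W_nonneg[of t] by (simp add: abs_mult cos_product_weight_le)
qed (rule I2)

lemma borel_measurable_cos_kernel: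
  fixes W :: "real \<Rightarrow> real"
  assumes [measurable]: "W \<in> borel_measurable borel"
    "f \<in> borel_measurable N" "g \<in> borel_measurable N"
  shows "(\<lambda>x. cos_kernel W (f x) (g x)) \<in> borel_measurable N"
  unfolding cos_kernel_def by (rule lborel.borel_measurable_lebesgue_integral) measurable

lemma has_bochner_integral_power2_norm_cos_sum:
  fixes z :: "nat \<Rightarrow> 'h::real_inner" and e :: "nat \<Rightarrow> real" and W :: "real \<Rightarrow> real"
  assumes W_meas: "W \<in> borel_measurable borel" and I2: "integrable lborel (\<lambda>t. t^2 * W t)"
  shows "has_bochner_integral lborel (\<lambda>t. t^2 * (norm (\<Sum>j<n. cos (t * e j) *\<^sub>R z j))^2 * W t)
           (\<Sum>i<n. \<Sum>j<n. inner (z i) (z j) * cos_kernel W (e i) (e j))"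
proof -
  have "t^2 * (norm (\<Sum>j<n. cos (t * e j) *\<^sub>R z j))^2 * W t
        = (\<Sum>i<n. \<Sum>j<n. inner (z i) (z j) * (t^2 * (cos (t * e i) * cos (t * e j)) * W t))" for t
    by (subst sum.swap)
       (simp add: power2_norm_eq_inner inner_sum_left inner_sum_right sum_distrib_left
        sum_distrib_right algebra_simps)
  moreover have "has_bochner_integral lborel
      (\<lambda>t. \<Sum>i<n. \<Sum>j<n. inner (z i) (z j) * (t^2 * (cos (t * e i) * cos (t * e j)) * W t))
      (\<Sum>i<n. \<Sum>j<n. inner (z i) (z j) * cos_kernel W (e i) (e j))"
    unfolding cos_kernel_def
    by (intro has_bochner_integral_sum has_bochner_integral_mult_right
        has_bochner_integral_integrable integrable_cos_kernel_integrand W_meas I2)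
  ultimately show ?thesis by simp
qed

lemma cos_kernel_quadratic_form_nonneg:
  fixes z :: "nat \<Rightarrow> 'h::real_inner" and e :: "nat \<Rightarrow> real" and W :: "real \<Rightarrow> real"
  assumes W_meas: "W \<in> borel_measurable borel" and W_nonneg: "\<And>t. W t \<ge> 0"
    and I2: "integrable lborel (\<lambda>t. t^2 * W t)"
  shows "0 \<le> (\<Sum>i<n. \<Sum>j<n. inner (z i) (z j) * cos_kernel W (e i) (e j))"
proof -
  let ?f = "\<lambda>t. t^2 * (norm (\<Sum>j<n. cos (t * e j) *\<^sub>R z j))^2 * W t"
  have "0 \<le> integral\<^sup>L lborel ?f"
    using W_nonneg by (intro integral_nonneg_AE) auto
  also have "\<dots> = (\<Sum>i<n. \<Sum>j<n. inner (z i) (z j) * cos_kernel W (e i) (e j))"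
    by (rule has_bochner_integral_integral_eq has_bochner_integral_power2_norm_cos_sum W_meas I2)+
  finally show ?thesis .
qed

lemma abs_cos_sum_inner_integral_le:
  fixes z :: "nat \<Rightarrow> 'h::real_inner" and e :: "nat \<Rightarrow> real" and d :: 'h
    and W :: "real \<Rightarrow> real" and c :: real
  assumes W_meas: "W \<in> borel_measurable borel" and W_nonneg: "\<And>t. W t \<ge> 0"
    and I2: "integrable lborel (\<lambda>t. t^2 * W t)" and c: "0 < c"
  shows "\<bar>c * (\<integral>t. ((t / c) * (\<Sum>j<n. cos (t * e j) * inner (z j) d))\<^sup>2 * W t \<partial>lborel)\<bar>
           \<le> (norm d)\<^sup>2 * ((\<Sum>i<n. \<Sum>j<n. inner (z i) (z j) * cos_kernel W (e i) (e j)) / c)"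
proof -
  define V where "V t = (\<Sum>j<n. cos (t * e j) *\<^sub>R z j)" for t
  define R where "R t = t^2 * (norm (V t))^2 * W t" for t
  define L where "L t = ((t / c) * (\<Sum>j<n. cos (t * e j) * inner (z j) d))\<^sup>2 * W t" for t
  have R: "has_bochner_integral lborel R
      (\<Sum>i<n. \<Sum>j<n. inner (z i) (z j) * cos_kernel W (e i) (e j))"
    unfolding R_def V_def by (rule has_bochner_integral_power2_norm_cos_sum[OF W_meas I2])
  have L_le: "L t \<le> ((norm d)\<^sup>2 / c\<^sup>2) * R t" for t
  proof -
    have CS: "(inner (V t) d)\<^sup>2 \<le> (norm (V t))\<^sup>2 * (norm d)\<^sup>2"
      using Cauchy_Schwarz_ineq[of "V t" d] by (simp add: power2_norm_eq_inner)
    have "L t = (t^2 / c^2) * W t * (inner (V t) d)\<^sup>2"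
      by (simp add: L_def V_def inner_sum_left power_mult_distrib power_divide)
    also have "\<dots> \<le> (t^2 / c^2) * W t * ((norm (V t))\<^sup>2 * (norm d)\<^sup>2)"
      using CS W_nonneg[of t] by (intro mult_left_mono) auto
    also have "\<dots> = ((norm d)\<^sup>2 / c\<^sup>2) * R t"
      by (simp add: R_def)
    finally show ?thesis .
  qed
  have L_nonneg: "0 \<le> L t" for t
    using W_nonneg[of t] by (simp add: L_def)
  have R_int: "integrable lborel (\<lambda>t. ((norm d)\<^sup>2 / c\<^sup>2) * R t)"
    using integrable.intros[OF R] by simp
  have L_int: "integrable lborel L"
  proof (rule Bochner_Integration.integrable_bound[OF R_int])
    show "L \<in> borel_measurable lborel" unfolding L_def using W_meas by measurable
    show "AE t in lborel. norm (L t) \<le> norm ((norm d)\<^sup>2 / c\<^sup>2 * R t)"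
      using L_le L_nonneg
      by (intro AE_I2) (metis abs_ge_self abs_of_nonneg order_trans real_norm_def)
  qed
  have "\<bar>c * integral\<^sup>L lborel L\<bar> = c * integral\<^sup>L lborel L"
    using c L_nonneg by (simp add: integral_nonneg_AE)
  also have "\<dots> \<le> c * ((norm d)\<^sup>2 / c\<^sup>2 * integral\<^sup>L lborel R)"
    using integral_mono[OF L_int R_int L_le] c by (intro mult_left_mono) auto
  also have "\<dots> = (norm d)\<^sup>2 * (integral\<^sup>L lborel R / c)"
    using c by (simp add: power2_eq_square)
  finally show ?thesis
    unfolding L_def has_bochner_integral_integral_eq[OF R] .
qed

lemma (in prob_space)
  fixes U V :: "'a \<Rightarrow> 'h::{real_inner, banach, second_countable_topology}"
  assumes ind: "indep_var borel U borel V" and iU: "integrable M U" and iV: "integrable M V"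
  shows indep_var_inner_integrable: "integrable M (\<lambda>\<omega>. inner (U \<omega>) (V \<omega>))"
    and indep_var_integral_inner:
      "(\<integral>\<omega>. inner (U \<omega>) (V \<omega>) \<partial>M) = inner (\<integral>\<omega>. U \<omega> \<partial>M) (\<integral>\<omega>. V \<omega> \<partial>M)"
proof -
  have [measurable]: "U \<in> borel_measurable M" "V \<in> borel_measurable M" using iU iV by auto
  have "indep_var borel (norm \<circ> U) borel (norm \<circ> V)"
    by (rule indep_var_compose[OF ind]) auto
  then have "integrable M (\<lambda>\<omega>. (norm \<circ> U) \<omega> * (norm \<circ> V) \<omega>)"
    by (rule indep_var_integrable) (use iU iV in \<open>auto simp: o_def\<close>)
  then show int: "integrable M (\<lambda>\<omega>. inner (U \<omega>) (V \<omega>))"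
    by (rule Bochner_Integration.integrable_bound) (auto intro!: AE_I2 simp: Cauchy_Schwarz_ineq2)
  let ?PU = "distr M borel U" and ?PV = "distr M borel V"
  interpret pU: prob_space ?PU by (rule prob_space_distr) simp
  interpret pV: prob_space ?PV by (rule prob_space_distr) simp
  interpret P: pair_sigma_finite ?PU ?PV ..
  have dist: "?PU \<Otimes>\<^sub>M ?PV = distr M (borel \<Otimes>\<^sub>M borel) (\<lambda>x. (U x, V x))"
    using ind by (simp add: indep_var_distribution_eq)
  have intP: "integrable (?PU \<Otimes>\<^sub>M ?PV) (\<lambda>p. inner (fst p) (snd p))"
    unfolding dist by (subst integrable_distr_eq) (use int in auto)
  have "(\<integral>\<omega>. inner (U \<omega>) (V \<omega>) \<partial>M) = (\<integral>p. inner (fst p) (snd p) \<partial>(?PU \<Otimes>\<^sub>M ?PV))"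
    unfolding dist by (subst integral_distr) auto
  also have "\<dots> = (\<integral>u. (\<integral>v. inner u v \<partial>?PV) \<partial>?PU)"
    using P.integral_fst'[OF intP] by simp
  also have "\<dots> = (\<integral>u. inner u (\<integral>v. v \<partial>?PV) \<partial>?PU)"
    using iV by (simp add: integrable_distr_eq)
  also have "\<dots> = inner (\<integral>u. u \<partial>?PU) (\<integral>v. v \<partial>?PV)"
    using iU by (simp add: integrable_distr_eq)
  finally show "(\<integral>\<omega>. inner (U \<omega>) (V \<omega>) \<partial>M) = inner (\<integral>\<omega>. U \<omega> \<partial>M) (\<integral>\<omega>. V \<omega> \<partial>M)"
    by (simp add: integral_distr)
qed

lemma (in prob_space) indep_vars_indep_var:
  assumes indep: "indep_vars (\<lambda>_. N) X I" and "i \<in> I" "j \<in> I" "i \<noteq> j"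
  shows "indep_var N (X i) N (X j)"
proof -
  have "indep_var (PiM {i} (\<lambda>_. N)) (\<lambda>\<omega>. restrict (\<lambda>k. X k \<omega>) {i})
                  (PiM {j} (\<lambda>_. N)) (\<lambda>\<omega>. restrict (\<lambda>k. X k \<omega>) {j})"
    by (rule indep_var_restrict[OF indep]) (use assms in auto)
  then have "indep_var N ((\<lambda>f. f i) \<circ> (\<lambda>\<omega>. restrict (\<lambda>k. X k \<omega>) {i}))
                       N ((\<lambda>f. f j) \<circ> (\<lambda>\<omega>. restrict (\<lambda>k. X k \<omega>) {j}))"
    by (rule indep_var_compose) (simp_all add: measurable_component_singleton)
  then show ?thesis by (simp add: o_def)
qed

lemma sigma_sets_vimage_comp_subset:
  assumes Z: "Z \<in> measurable M N" and h: "h \<in> measurable N K"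
  shows "sigma_sets (space M) {(\<lambda>\<omega>. h (Z \<omega>)) -` A \<inter> space M | A. A \<in> sets K}
           \<subseteq> sets (vimage_algebra (space M) Z N)"
proof -
  have "(\<lambda>\<omega>. h (Z \<omega>)) \<in> measurable (vimage_algebra (space M) Z N) K"
    using Z
    by (intro measurable_compose[OF measurable_vimage_algebra1 h]) (auto simp: measurable_def)
  then show ?thesis
    unfolding sets_vimage_algebra[symmetric] by (intro sets_image_in_sets) simp_all
qed

lemma (in prob_space) indep_var_comp_of_indep_vimage:
  assumes indep: "indep_set (sets (vimage_algebra (space M) U N1))
                            (sets (vimage_algebra (space M) V N2))"
    and U: "U \<in> measurable M N1" and V: "V \<in> measurable M N2"
    and f: "f \<in> measurable N1 K" and g: "g \<in> measurable N2 K"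
  shows "indep_var K (\<lambda>\<omega>. f (U \<omega>)) K (\<lambda>\<omega>. g (V \<omega>))"
  unfolding indep_var_eq
proof (intro conjI)
  show "random_variable K (\<lambda>\<omega>. f (U \<omega>))" "random_variable K (\<lambda>\<omega>. g (V \<omega>))"
    using measurable_compose[OF U f] measurable_compose[OF V g] by simp_all
  show "indep_set (sigma_sets (space M) {(\<lambda>\<omega>. f (U \<omega>)) -` A \<inter> space M | A. A \<in> sets K})
                  (sigma_sets (space M) {(\<lambda>\<omega>. g (V \<omega>)) -` A \<inter> space M | A. A \<in> sets K})"
    using indep sigma_sets_vimage_comp_subset[OF U f] sigma_sets_vimage_comp_subset[OF V g]
    unfolding indep_sets2_eq by blast
qed

lemma
  fixes f :: "'b \<Rightarrow> 'c::{banach, second_countable_topology}"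
  assumes distr_eq: "distr M N P = distr M N Q"
    and P: "P \<in> measurable M N" and Q: "Q \<in> measurable M N" and f: "f \<in> borel_measurable N"
  shows integral_comp_eq_of_distr_eq: "(\<integral>\<omega>. f (P \<omega>) \<partial>M) = (\<integral>\<omega>. f (Q \<omega>) \<partial>M)"
    and integrable_comp_iff_of_distr_eq: "integrable M (\<lambda>\<omega>. f (P \<omega>)) \<longleftrightarrow> integrable M (\<lambda>\<omega>. f (Q \<omega>))"
  using integral_distr[OF P f] integral_distr[OF Q f]
    integrable_distr_eq[OF P f] integrable_distr_eq[OF Q f] distr_eq
  by simp_all

lemma (in prob_space)
  fixes X :: "nat \<Rightarrow> 'a \<Rightarrow> 'h::{real_inner, banach, second_countable_topology}"
  assumes indep: "indep_vars (\<lambda>_. borel) X UNIV"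
    and ident: "\<And>i. distr M borel (X i) = distr M borel (X 0)"
    and sq: "integrable M (\<lambda>\<omega>. (norm (X 0 \<omega>))\<^sup>2)"
  defines "m \<equiv> \<integral>\<omega>. X 0 \<omega> \<partial>M"
  shows iid_centred_inner_integrable: "integrable M (\<lambda>\<omega>. inner (X i \<omega> - m) (X j \<omega> - m))"
    and iid_centred_inner_integral: "(\<integral>\<omega>. inner (X i \<omega> - m) (X j \<omega> - m) \<partial>M)
           = (if i = j then \<integral>\<omega>. (norm (X 0 \<omega> - m))\<^sup>2 \<partial>M else 0)"
proof -
  have X_meas[measurable]: "X i \<in> borel_measurable M" for i
    using indep unfolding indep_vars_def by auto
  have int_X0: "integrable M (X 0)"
    by (rule integrable_norm_cancel[OF square_integrable_imp_integrable[OF _ sq]]) simp_all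
  have int_X: "integrable M (X i)" for i
    using integrable_comp_iff_of_distr_eq[OF ident X_meas X_meas, where f="\<lambda>x. x"] int_X0
    by simp
  have mean_X: "(\<integral>\<omega>. X i \<omega> \<partial>M) = m" for i
    using integral_comp_eq_of_distr_eq[OF ident X_meas X_meas, where f="\<lambda>x. x"]
    unfolding m_def by simp
  have "(norm (X 0 \<omega> - m))\<^sup>2 = (norm (X 0 \<omega>))\<^sup>2 - 2 * inner (X 0 \<omega>) m + (norm m)\<^sup>2" for \<omega>
    by (simp add: power2_norm_eq_inner inner_diff_left inner_diff_right inner_commute)
  then have int_sq0: "integrable M (\<lambda>\<omega>. (norm (X 0 \<omega> - m))\<^sup>2)"
    using sq int_X[of 0] by simp
  have int_sq: "integrable M (\<lambda>\<omega>. inner (X i \<omega> - m) (X i \<omega> - m))" for i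
    using integrable_comp_iff_of_distr_eq[OF ident X_meas X_meas, where f="\<lambda>x. (norm (x - m))\<^sup>2"]
      int_sq0
    by (simp add: power2_norm_eq_inner)
  have var: "(\<integral>\<omega>. inner (X i \<omega> - m) (X i \<omega> - m) \<partial>M) = (\<integral>\<omega>. (norm (X 0 \<omega> - m))\<^sup>2 \<partial>M)" for i
    using integral_comp_eq_of_distr_eq[OF ident X_meas X_meas, where f="\<lambda>x. (norm (x - m))\<^sup>2"]
    by (simp add: power2_norm_eq_inner)
  have int_centred: "integrable M (\<lambda>\<omega>. X i \<omega> - m)"
    and mean_centred: "(\<integral>\<omega>. X i \<omega> - m \<partial>M) = 0" for i
    using int_X[of i] mean_X[of i] by (simp_all add: prob_space)
  have indep_centred: "indep_var borel (\<lambda>\<omega>. X i \<omega> - m) borel (\<lambda>\<omega>. X j \<omega> - m)" if "i \<noteq> j" for i j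
    using indep_var_compose[OF indep_vars_indep_var[OF indep _ _ that],
        of "\<lambda>x. x - m" borel "\<lambda>x. x - m" borel]
    by (simp add: o_def)
  show "integrable M (\<lambda>\<omega>. inner (X i \<omega> - m) (X j \<omega> - m))"
    using int_sq indep_var_inner_integrable[OF indep_centred int_centred int_centred]
    by (cases "i = j") auto
  show "(\<integral>\<omega>. inner (X i \<omega> - m) (X j \<omega> - m) \<partial>M)
          = (if i = j then \<integral>\<omega>. (norm (X 0 \<omega> - m))\<^sup>2 \<partial>M else 0)"
    using var indep_var_integral_inner[OF indep_centred int_centred int_centred] mean_centred
    by (cases "i = j") auto
qed

lemma (in prob_space)
  fixes Z :: "nat \<Rightarrow> 'a \<Rightarrow> 'h::real_inner" and K :: "nat \<Rightarrow> nat \<Rightarrow> 'a \<Rightarrow> real"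
  assumes int: "\<And>i j. integrable M (\<lambda>\<omega>. inner (Z i \<omega>) (Z j \<omega>))"
    and uncorr: "\<And>i j. i \<noteq> j \<Longrightarrow> (\<integral>\<omega>. inner (Z i \<omega>) (Z j \<omega>) \<partial>M) = 0"
    and var: "\<And>i. (\<integral>\<omega>. (norm (Z i \<omega>))\<^sup>2 \<partial>M) \<le> s"
    and K_meas: "\<And>i j. K i j \<in> borel_measurable M"
    and K_bound: "\<And>i j \<omega>. \<omega> \<in> space M \<Longrightarrow> \<bar>K i j \<omega>\<bar> \<le> C"
    and indep: "\<And>i j. indep_var borel (\<lambda>\<omega>. inner (Z i \<omega>) (Z j \<omega>)) borel (K i j)"
  shows integrable_indep_weighted_quadratic_form:
      "integrable M (\<lambda>\<omega>. \<Sum>i<n. \<Sum>j<n. inner (Z i \<omega>) (Z j \<omega>) * K i j \<omega>)"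
    and integral_indep_weighted_quadratic_form_le:
      "(\<integral>\<omega>. (\<Sum>i<n. \<Sum>j<n. inner (Z i \<omega>) (Z j \<omega>) * K i j \<omega>) \<partial>M) \<le> real n * s * C"
proof -
  have int_K: "integrable M (K i j)" for i j
    using K_meas K_bound by (intro integrable_const_bound[where B=C]) auto
  have int_T: "integrable M (\<lambda>\<omega>. inner (Z i \<omega>) (Z j \<omega>) * K i j \<omega>)" for i j
    by (rule indep_var_integrable[OF indep int int_K])
  have E_T: "(\<integral>\<omega>. inner (Z i \<omega>) (Z j \<omega>) * K i j \<omega> \<partial>M)
               = (\<integral>\<omega>. inner (Z i \<omega>) (Z j \<omega>) \<partial>M) * (\<integral>\<omega>. K i j \<omega> \<partial>M)" for i j
    by (rule indep_var_lebesgue_integral[OF indep int int_K])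
  have E_diag: "(\<integral>\<omega>. inner (Z i \<omega>) (Z i \<omega>) * K i i \<omega> \<partial>M) \<le> s * C" for i
  proof -
    have "(\<integral>\<omega>. K i i \<omega> \<partial>M) \<le> (\<integral>\<omega>. C \<partial>M)"
      using K_bound by (intro integral_mono_AE int_K) (auto simp: abs_le_iff)
    then have EK: "(\<integral>\<omega>. K i i \<omega> \<partial>M) \<le> C" by (simp add: prob_space)
    have EZ: "0 \<le> (\<integral>\<omega>. inner (Z i \<omega>) (Z i \<omega>) \<partial>M)"
      by (intro integral_nonneg_AE) auto
    obtain \<omega> where "\<omega> \<in> space M" using not_empty by blast
    then have "0 \<le> C" using K_bound[of \<omega> i i] by linarith
    have "(\<integral>\<omega>. inner (Z i \<omega>) (Z i \<omega>) * K i i \<omega> \<partial>M) \<le> (\<integral>\<omega>. inner (Z i \<omega>) (Z i \<omega>) \<partial>M) * C"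
      unfolding E_T using EK EZ by (rule mult_left_mono)
    also have "\<dots> \<le> s * C"
      using var[of i] \<open>0 \<le> C\<close> by (intro mult_right_mono) (simp_all add: power2_norm_eq_inner)
    finally show ?thesis .
  qed
  show "integrable M (\<lambda>\<omega>. \<Sum>i<n. \<Sum>j<n. inner (Z i \<omega>) (Z j \<omega>) * K i j \<omega>)"
    by (intro Bochner_Integration.integrable_sum int_T)
  have "(\<integral>\<omega>. (\<Sum>i<n. \<Sum>j<n. inner (Z i \<omega>) (Z j \<omega>) * K i j \<omega>) \<partial>M)
          = (\<Sum>i<n. \<Sum>j<n. \<integral>\<omega>. inner (Z i \<omega>) (Z j \<omega>) * K i j \<omega> \<partial>M)"
    by (simp add: Bochner_Integration.integral_sum Bochner_Integration.integrable_sum int_T)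
  also have "\<dots> = (\<Sum>i<n. \<integral>\<omega>. inner (Z i \<omega>) (Z i \<omega>) * K i i \<omega> \<partial>M)"
  proof (intro sum.cong refl)
    fix i assume "i \<in> {..<n}"
    then show "(\<Sum>j<n. \<integral>\<omega>. inner (Z i \<omega>) (Z j \<omega>) * K i j \<omega> \<partial>M)
                 = (\<integral>\<omega>. inner (Z i \<omega>) (Z i \<omega>) * K i i \<omega> \<partial>M)"
      using E_T uncorr by (subst sum.remove[of _ i]) (auto intro!: sum.neutral)
  qed
  also have "\<dots> \<le> (\<Sum>i<n. s * C)"
    by (intro sum_mono E_diag)
  finally show "(\<integral>\<omega>. (\<Sum>i<n. \<Sum>j<n. inner (Z i \<omega>) (Z j \<omega>) * K i j \<omega>) \<partial>M) \<le> real n * s * C"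
    by simp
qed

lemma (in prob_space) cos_kernel_quadratic_form_expectation_le:
  fixes X :: "nat \<Rightarrow> 'a \<Rightarrow> 'h::{real_inner, banach, second_countable_topology}"
    and eps :: "nat \<Rightarrow> 'a \<Rightarrow> real" and W :: "real \<Rightarrow> real"
  assumes X_indep: "indep_vars (\<lambda>_. borel) X UNIV"
    and X_ident: "\<And>i. distr M borel (X i) = distr M borel (X 0)"
    and X_sq: "integrable M (\<lambda>\<omega>. (norm (X 0 \<omega>))\<^sup>2)"
    and eps_meas: "\<And>i. eps i \<in> borel_measurable M"
    and eps_X_indep: "indep_set
              (sets (vimage_algebra (space M) (\<lambda>\<omega> i. X i \<omega>) (PiM UNIV (\<lambda>_. borel))))
              (sets (vimage_algebra (space M) (\<lambda>\<omega> i. eps i \<omega>) (PiM UNIV (\<lambda>_. borel))))"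
    and W_meas: "W \<in> borel_measurable borel" and W_nonneg: "\<And>t. W t \<ge> 0"
    and I2: "integrable lborel (\<lambda>t. t^2 * W t)"
  defines "m \<equiv> \<integral>\<omega>. X 0 \<omega> \<partial>M"
  shows "integrable M (\<lambda>\<omega>. \<Sum>i<n. \<Sum>j<n.
           inner (X i \<omega> - m) (X j \<omega> - m) * cos_kernel W (eps i \<omega>) (eps j \<omega>))"
    and "(\<integral>\<omega>. (\<Sum>i<n. \<Sum>j<n. inner (X i \<omega> - m) (X j \<omega> - m) * cos_kernel W (eps i \<omega>) (eps j \<omega>)) \<partial>M)
           \<le> real n * (\<integral>\<omega>. (norm (X 0 \<omega> - m))\<^sup>2 \<partial>M) * (\<integral>t. t^2 * W t \<partial>lborel)"
proof -
  have [measurable]: "X i \<in> borel_measurable M" for i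
    using X_indep unfolding indep_vars_def by auto
  note eps_meas[measurable] W_meas[measurable] borel_measurable_cos_kernel[measurable (raw)]
  note iid = iid_centred_inner_integrable[OF X_indep X_ident X_sq, folded m_def]
    iid_centred_inner_integral[OF X_indep X_ident X_sq, folded m_def]
  have uncorr: "(\<integral>\<omega>. inner (X i \<omega> - m) (X j \<omega> - m) \<partial>M) = 0" if "i \<noteq> j" for i j
    using iid(2)[of i j] that by simp
  have var: "(\<integral>\<omega>. (norm (X i \<omega> - m))\<^sup>2 \<partial>M) \<le> (\<integral>\<omega>. (norm (X 0 \<omega> - m))\<^sup>2 \<partial>M)" for i
    using iid(2)[of i i] by (simp add: power2_norm_eq_inner)
  have indep: "indep_var borel (\<lambda>\<omega>. inner (X i \<omega> - m) (X j \<omega> - m))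
                         borel (\<lambda>\<omega>. cos_kernel W (eps i \<omega>) (eps j \<omega>))" for i j
    by (rule indep_var_comp_of_indep_vimage[OF eps_X_indep])
       (measurable, auto intro: measurable_PiM_single')
  note quadratic_form = integrable_indep_weighted_quadratic_form
    integral_indep_weighted_quadratic_form_le
  note weights = borel_measurable_cos_kernel[OF W_meas eps_meas eps_meas]
    abs_cos_kernel_le[OF W_meas W_nonneg I2]
  show "integrable M (\<lambda>\<omega>. \<Sum>i<n. \<Sum>j<n.
           inner (X i \<omega> - m) (X j \<omega> - m) * cos_kernel W (eps i \<omega>) (eps j \<omega>))"
    by (rule quadratic_form(1)[OF iid(1) uncorr var weights indep])
  show "(\<integral>\<omega>. (\<Sum>i<n. \<Sum>j<n. inner (X i \<omega> - m) (X j \<omega> - m) * cos_kernel W (eps i \<omega>) (eps j \<omega>)) \<partial>M)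
           \<le> real n * (\<integral>\<omega>. (norm (X 0 \<omega> - m))\<^sup>2 \<partial>M) * (\<integral>t. t^2 * W t \<partial>lborel)"
    by (rule quadratic_form(2)[OF iid(1) uncorr var weights indep])
qed

lemma (in finite_measure) o_P_mono_rate:
  assumes Z: "o_P M Z r" and Z_meas: "\<And>n. Z n \<in> borel_measurable M"
    and le: "\<forall>\<^sub>F n in sequentially. r n \<le> s n"
  shows "o_P M Z s"
  unfolding o_P_def
proof (intro allI impI)
  fix e :: real assume e: "0 < e"
  have le_measure: "\<forall>\<^sub>F n in sequentially.
      measure M {\<omega> \<in> space M. \<bar>Z n \<omega>\<bar> > e * s n} \<le> measure M {\<omega> \<in> space M. \<bar>Z n \<omega>\<bar> > e * r n}"
    using le
  proof eventually_elim
    case (elim n)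
    have "{\<omega> \<in> space M. \<bar>Z n \<omega>\<bar> > e * r n} \<in> sets M"
      using Z_meas[of n] by measurable
    moreover have "e * r n \<le> e * s n"
      using elim e by (intro mult_left_mono) auto
    ultimately show ?case
      by (intro finite_measure_mono) auto
  qed
  have "(\<lambda>n. measure M {\<omega> \<in> space M. \<bar>Z n \<omega>\<bar> > e * r n}) \<longlonglongrightarrow> 0"
    using Z e by (simp add: o_P_def)
  then show "(\<lambda>n. measure M {\<omega> \<in> space M. \<bar>Z n \<omega>\<bar> > e * s n}) \<longlonglongrightarrow> 0"
    using tendsto_sandwich[OF _ le_measure tendsto_const] by simp
qed

lemma (in finite_measure) measure_le_of_subset_Un:
  assumes "S \<subseteq> S1 \<union> S2" "S1 \<in> sets M" "S2 \<in> sets M"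
  shows "measure M S \<le> measure M S1 + measure M S2"
proof (cases "S \<in> sets M")
  case True
  then have "measure M S \<le> measure M (S1 \<union> S2)"
    using assms by (intro finite_measure_mono) auto
  also have "\<dots> \<le> measure M S1 + measure M S2"
    using assms by (intro measure_Un_le)
  finally show ?thesis .
qed (simp add: measure_notin_sets)

lemma (in prob_space) o_P_of_abs_le_power2_mult:
  fixes D A Q :: "nat \<Rightarrow> 'a \<Rightarrow> real"
  assumes D: "o_P M D (\<lambda>_. 1)" and D_meas: "\<And>n. D n \<in> borel_measurable M"
    and A_int: "\<And>n. integrable M (A n)" and A_nonneg: "\<And>n \<omega>. \<omega> \<in> space M \<Longrightarrow> 0 \<le> A n \<omega>"
    and A_bound: "\<forall>\<^sub>F n in sequentially. (\<integral>\<omega>. A n \<omega> \<partial>M) \<le> C"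
    and Q_le: "\<forall>\<^sub>F n in sequentially. \<forall>\<omega>\<in>space M. \<bar>Q n \<omega>\<bar> \<le> (D n \<omega>)\<^sup>2 * A n \<omega>"
  shows "o_P M Q (\<lambda>_. 1)"
  unfolding o_P_def
proof (intro allI impI tendstoI)
  fix e r :: real assume e: "0 < e" and r: "0 < r"
  (* chosen so that Markov's inequality gives P(A n \<ge> e / \<delta>) \<le> r / 2 *)
  define \<kappa> where "\<kappa> = \<bar>C\<bar> + 1"
  define \<delta> where "\<delta> = r * e / (2 * \<kappa>)"
  have \<kappa>: "0 < \<kappa>" and "C \<le> \<kappa>" by (simp_all add: \<kappa>_def)
  then have \<delta>: "0 < \<delta>" and \<kappa>_\<delta>: "\<kappa> / (e / \<delta>) = r / 2"
    using e r by (simp_all add: \<delta>_def field_simps)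
  have "(\<lambda>n. measure M {\<omega> \<in> space M. \<bar>D n \<omega>\<bar> > sqrt \<delta> * 1}) \<longlonglongrightarrow> 0"
    using D \<delta> by (simp add: o_P_def)
  then have "\<forall>\<^sub>F n in sequentially. measure M {\<omega> \<in> space M. \<bar>D n \<omega>\<bar> > sqrt \<delta> * 1} < r / 2"
    using r by (intro order_tendstoD(2)) auto
  then show "\<forall>\<^sub>F n in sequentially. dist (measure M {\<omega> \<in> space M. \<bar>Q n \<omega>\<bar> > e * 1}) 0 < r"
    using A_bound Q_le
  proof eventually_elim
    case (elim n)
    let ?S1 = "{\<omega> \<in> space M. \<bar>D n \<omega>\<bar> > sqrt \<delta> * 1}" and ?S2 = "{\<omega> \<in> space M. A n \<omega> \<ge> e / \<delta>}"
    have "\<omega> \<in> ?S1 \<union> ?S2" if \<omega>: "\<omega> \<in> space M" "\<bar>Q n \<omega>\<bar> > e * 1" for \<omega>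
    proof (rule ccontr)
      assume "\<omega> \<notin> ?S1 \<union> ?S2"
      then have "\<bar>D n \<omega>\<bar> \<le> sqrt \<delta>" and A_small: "A n \<omega> < e / \<delta>"
        using \<omega> by auto
      then have "(D n \<omega>)\<^sup>2 \<le> \<delta>"
        using \<delta> by (metis abs_ge_zero power2_abs power_mono real_sqrt_pow2 less_imp_le)
      then have "\<bar>Q n \<omega>\<bar> \<le> \<delta> * A n \<omega>"
        using elim(3) \<omega> A_nonneg[of \<omega> n] by (meson mult_right_mono order_trans)
      also have "\<dots> < \<delta> * (e / \<delta>)"
        using A_small \<delta> by (intro mult_strict_left_mono)
      finally show False using \<omega> \<delta> by simp
    qed
    then have "measure M {\<omega> \<in> space M. \<bar>Q n \<omega>\<bar> > e * 1} \<le> measure M ?S1 + measure M ?S2"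
      using D_meas[of n] A_int[of n] by (intro measure_le_of_subset_Un) auto
    moreover have "measure M ?S2 \<le> (\<integral>\<omega>. A n \<omega> \<partial>M) / (e / \<delta>)"
      using A_nonneg e \<delta>
      by (intro integral_Markov_inequality_measure[OF A_int, where A="space M"]) auto
    moreover have "(\<integral>\<omega>. A n \<omega> \<partial>M) / (e / \<delta>) \<le> \<kappa> / (e / \<delta>)"
      using elim(2) \<open>C \<le> \<kappa>\<close> e \<delta> by (intro divide_right_mono) auto
    ultimately have "measure M {\<omega> \<in> space M. \<bar>Q n \<omega>\<bar> > e * 1} < r"
      using elim(1) \<kappa>_\<delta> by linarith
    then show ?case by simp
  qed
qed

lemma (in finite_measure) integrable_power2_of_power4:
  fixes f :: "'a \<Rightarrow> real"
  assumes [measurable]: "f \<in> borel_measurable M" and "integrable M (\<lambda>x. (f x)^4)"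
  shows "integrable M (\<lambda>x. (f x)\<^sup>2)"
proof (rule Bochner_Integration.integrable_bound)
  show "integrable M (\<lambda>x. 1 + (f x)^4)" using assms(2) by simp
  show "AE x in M. norm ((f x)\<^sup>2) \<le> norm (1 + (f x)^4)"
    using power2_le_one_plus_power4 by (intro AE_I2) simp
qed simp

lemma measurable_eq_comp_restrict:
  assumes g: "g \<in> measurable (PiM I (\<lambda>_. N)) K" and P: "\<And>i. i \<in> I \<Longrightarrow> P i \<in> measurable M N"
    and eq: "\<And>\<omega>. \<omega> \<in> space M \<Longrightarrow> b \<omega> = g (\<lambda>i\<in>I. P i \<omega>)"
  shows "b \<in> measurable M K"
proof -
  have "(\<lambda>\<omega>. g (\<lambda>i\<in>I. P i \<omega>)) \<in> measurable M K"
    using P by (intro measurable_compose[OF _ g] measurable_restrict) auto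
  then show ?thesis using eq by (subst measurable_cong) auto
qed

theorem lemmaA3:
  fixes M :: "'a measure"
    and X :: "nat \<Rightarrow> 'a \<Rightarrow> 'h::{real_inner, banach, second_countable_topology}"
    and Y eps :: "nat \<Rightarrow> 'a \<Rightarrow> real"
    and alpha :: real and beta :: 'h
    and alphahat :: "nat \<Rightarrow> 'a \<Rightarrow> real" and betahat :: "nat \<Rightarrow> 'a \<Rightarrow> 'h"
    and W :: "real \<Rightarrow> real"
  assumes P: "prob_space M"
    and X_meas: "\<And>i. X i \<in> borel_measurable M"
    and eps_meas: "\<And>i. eps i \<in> borel_measurable M"
    and model: "\<And>i \<omega>. \<omega> \<in> space M \<Longrightarrow> Y i \<omega> = alpha + inner (X i \<omega>) beta + eps i \<omega>"
    and XY_indep: "prob_space.indep_vars M (\<lambda>_. borel) (\<lambda>i \<omega>. (X i \<omega>, Y i \<omega>)) UNIV"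
    and XY_ident: "\<And>i. distr M borel (\<lambda>\<omega>. (X i \<omega>, Y i \<omega>)) = distr M borel (\<lambda>\<omega>. (X 0 \<omega>, Y 0 \<omega>))"
    and eps_indep: "prob_space.indep_vars M (\<lambda>_. borel) eps UNIV"
    and eps_ident: "\<And>i. distr M borel (eps i) = distr M borel (eps 0)"
    and eps_X_indep: "prob_space.indep_set M
              (sets (vimage_algebra (space M) (\<lambda>\<omega> i. X i \<omega>) (PiM UNIV (\<lambda>_. borel))))
              (sets (vimage_algebra (space M) (\<lambda>\<omega> i. eps i \<omega>) (PiM UNIV (\<lambda>_. borel))))"
    and eps_int: "integrable M (eps 0)"
    and eps_centred: "(\<integral>\<omega>. eps 0 \<omega> \<partial>M) = 0"
    and eps_sq: "integrable M (\<lambda>\<omega>. (eps 0 \<omega>)\<^sup>2)"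
    and eps_cdf: "\<exists>f f' B. (\<forall>t. (cdf_of M (eps 0) has_real_derivative f t) (at t))
                        \<and> (\<forall>t. (f has_real_derivative f' t) (at t))
                        \<and> (\<forall>t. \<bar>f t\<bar> \<le> B \<and> \<bar>f' t\<bar> \<le> B)"
    and X_4th: "integrable M (\<lambda>\<omega>. (norm (X 0 \<omega>)) ^ 4)"
    and betahat_sample: "\<And>n. \<exists>g. g \<in> borel_measurable (PiM {..<n} (\<lambda>_. borel)) \<and>
                           (\<forall>\<omega>\<in>space M. betahat n \<omega> = g (\<lambda>i\<in>{..<n}. (X i \<omega>, Y i \<omega>)))"
    and alphahat_def: "\<And>n \<omega>. n \<ge> 1 \<Longrightarrow> \<omega> \<in> space M \<Longrightarrow>
                alphahat n \<omega> = (\<Sum>i<n. Y i \<omega>) / real n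
                                 - inner ((1 / real n) *\<^sub>R (\<Sum>i<n. X i \<omega>)) (betahat n \<omega>)"
    and betahat_rate: "o_P M (\<lambda>n \<omega>. norm (betahat n \<omega> - beta)) (\<lambda>n. real n powr (-1/4))"
    and W_meas: "W \<in> borel_measurable borel"
    and W_nonneg: "\<And>t. W t \<ge> 0"
    and W_symm: "\<And>t. W (-t) = W t"
    and W_int: "integrable lborel W"
    and W_4th: "integrable lborel (\<lambda>t. t ^ 4 * W t)"
  shows "o_P M (\<lambda>n \<omega>. real n *
            (\<integral>t. ((t / real n) * (\<Sum>j<n. cos (t * eps j \<omega>) *
                     inner (X j \<omega> - (\<integral>\<omega>'. X 0 \<omega>' \<partial>M)) (betahat n \<omega> - beta)))\<^sup>2 * W t \<partial>lborel))
            (\<lambda>_. 1)"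
proof -
  interpret prob_space M by (rule P)
  note X_meas[measurable] eps_meas[measurable]
  define m where "m = (\<integral>\<omega>. X 0 \<omega> \<partial>M)"
  define A where "A n \<omega> = (\<Sum>i<n. \<Sum>j<n.
      inner (X i \<omega> - m) (X j \<omega> - m) * cos_kernel W (eps i \<omega>) (eps j \<omega>)) / real n" for n \<omega>
  have [measurable]: "Y i \<in> borel_measurable M" for i
    by (subst measurable_cong[OF model]) measurable
  have betahat_meas: "(\<lambda>\<omega>. norm (betahat n \<omega> - beta)) \<in> borel_measurable M" for n
  proof -
    obtain g where g: "g \<in> borel_measurable (PiM {..<n} (\<lambda>_. borel))"
      and "\<forall>\<omega>\<in>space M. betahat n \<omega> = g (\<lambda>i\<in>{..<n}. (X i \<omega>, Y i \<omega>))"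
      using betahat_sample[of n] by blast
    then have "betahat n \<in> borel_measurable M"
      by (intro measurable_eq_comp_restrict[OF g]) auto
    then show ?thesis by measurable
  qed
  have "\<forall>\<^sub>F n in sequentially. real n powr (-1/4) \<le> 1"
    using eventually_ge_at_top[of 1] by eventually_elim (use powr_mono[of "-1/4" 0] in auto)
  with betahat_rate betahat_meas have rate: "o_P M (\<lambda>n \<omega>. norm (betahat n \<omega> - beta)) (\<lambda>_. 1)"
    by (rule o_P_mono_rate)
  have I2: "integrable lborel (\<lambda>t. t^2 * W t)"
    by (rule integrable_power2_mult_weight[OF W_meas W_nonneg W_int W_4th])
  have X_indep: "indep_vars (\<lambda>_. borel) X UNIV"
    using indep_vars_compose2[OF XY_indep, where Y="\<lambda>_. fst" and N="\<lambda>_. borel"]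
    by (simp flip: borel_prod)
  have X_ident: "distr M borel (X i) = distr M borel (X 0)" for i
    using arg_cong[OF XY_ident[of i], where f="\<lambda>N. distr N borel fst"]
    by (simp add: distr_distr comp_def flip: borel_prod)
  have X_sq: "integrable M (\<lambda>\<omega>. (norm (X 0 \<omega>))\<^sup>2)"
    using X_4th by (intro integrable_power2_of_power4) simp_all
  note quadratic_form = cos_kernel_quadratic_form_expectation_le[OF X_indep X_ident X_sq eps_meas
      eps_X_indep W_meas W_nonneg I2, folded m_def]
  have A_int: "integrable M (A n)" for n
    unfolding A_def[abs_def] using quadratic_form(1) by simp
  have A_nonneg: "0 \<le> A n \<omega>" for n \<omega>
    unfolding A_def
    by (intro divide_nonneg_nonneg cos_kernel_quadratic_form_nonneg[OF W_meas W_nonneg I2]) simp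
  have A_bound: "\<forall>\<^sub>F n in sequentially.
      (\<integral>\<omega>. A n \<omega> \<partial>M) \<le> (\<integral>\<omega>. (norm (X 0 \<omega> - m))\<^sup>2 \<partial>M) * (\<integral>t. t^2 * W t \<partial>lborel)"
    using eventually_ge_at_top[of 1]
    by eventually_elim (use quadratic_form(2) in \<open>simp add: A_def divide_le_eq mult_ac\<close>)
  show ?thesis
    unfolding m_def[symmetric]
    by (rule o_P_of_abs_le_power2_mult[OF rate betahat_meas A_int A_nonneg A_bound],
        rule eventually_mono[OF eventually_ge_at_top[of 1]])
       (unfold A_def, intro ballI abs_cos_sum_inner_integral_le[OF W_meas W_nonneg I2], simp)
qed

end
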